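(* Let $K\ge 1$ and $T\ge 2$ be integers and let $a_1,\dots,a_{T-1}$ be binary sequences of period $K$. Define the binary sequences $s=I(0_K,a_1,\dots,a_{T-1})$ and $s'=I(1_K,a_1,\dots,a_{T-1})$ of period $KT$. For $0\le \tau<KT$ write $\tau=\tau_1T+\tau_2$ with $0\le\tau_2\le T-1$. Then $$R_{s'}(\tau)=\begin{cases}R_s(\tau)&\text{if }\tau_2=0,\\ R_s(\tau)+2d(a_{\tau_2})+2d(a_{T-\tau_2})&\text{if }\tau_2\neq 0,\end{cases}$$ $$R_{s,s'}(\tau)=\begin{cases}KT-2K&\text{if }\tau=0,\\ R_s(\tau)-2K&\text{if }\tau_2=0,\ \tau\neq 0,\\ R_s(\tau)+2d(a_{T-\tau_2})&\text{otherwise},\end{cases}\qquad R_{s',s}(\tau)=\begin{cases}KT-2K&\text{if }\tau=0,\\ R_s(\tau)-2K&\text{if }\tau_2=0,\ \tau\neq 0,\\ R_s(\tau)+2d(a_{\tau_2})&\text{otherwise}.\end{cases}$$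
   Context: A binary sequence of period $n$ is a map $\mathbb{Z}\to\{0,1\}$ with period $n$ (indices are taken modulo $n$). For binary sequences $a,b$ of period $n$, the periodic correlation is $R_{a,b}(\tau)=\sum_{t=0}^{n-1}(-1)^{a(t)+b(t+\tau)}$ (with $t+\tau$ taken mod $n$), and $R_a(\tau)=R_{a,a}(\tau)$ is the autocorrelation. For binary sequences $b_0,\dots,b_{T-1}$ of period $K$, the interleaved sequence $I(b_0,\dots,b_{T-1})$ is the binary sequence $v$ of period $KT$ defined by $v(iT+j)=b_j(i)$ for $0\le i\le K-1$, $0\le j\le T-1$ (i.e. the $j$-th column of the $K\times T$ array whose rows are consecutive blocks of $T$ terms of $v$ is $b_j$). $0_K$ and $1_K$ denote the all-zero and all-one sequences of period $K$. For a binary sequence $a$ of period $K$, its balance difference is $d(a)=2|\{0\le t\le K-1: a(t)=1\}|-K$. *)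

theory Defs
  imports Main
begin

text \<open>A binary sequence of period n is represented by a function nat => bool
  (True = 1, False = 0); only its values at 0..n-1 matter, since every index is
  reduced modulo n.\<close>

definition corr :: "nat \<Rightarrow> (nat \<Rightarrow> bool) \<Rightarrow> (nat \<Rightarrow> bool) \<Rightarrow> nat \<Rightarrow> int" where
  "corr n a b \<tau> = (\<Sum>t<n. (-1::int) ^ (of_bool (a (t mod n)) + of_bool (b ((t + \<tau>) mod n))))"

definition acorr :: "nat \<Rightarrow> (nat \<Rightarrow> bool) \<Rightarrow> nat \<Rightarrow> int" where
  "acorr n a \<tau> = corr n a a \<tau>"

text \<open>Interleaved sequence I(b_0,...,b_{T-1}) of period K*T: v(iT+j) = b_j(i).\<close>
definition interleave :: "nat \<Rightarrow> nat \<Rightarrow> (nat \<Rightarrow> nat \<Rightarrow> bool) \<Rightarrow> nat \<Rightarrow> bool" where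
  "interleave K T b k = b ((k mod (K * T)) mod T) (((k mod (K * T)) div T) mod K)"

definition baldiff :: "nat \<Rightarrow> (nat \<Rightarrow> bool) \<Rightarrow> int" where
  "baldiff K a = 2 * int (card {t. t < K \<and> a t}) - int K"

end

theory Submission
  imports Defs "HOL-Number_Theory.Cong"
begin

text \<open>Column 0 of the array of s is identically 0, so s' is s with the indicator e of the multiples
  of T added on a disjoint support, and the signs satisfy (-1)^s' = (-1)^s - 2e. Expanding the
  correlation sums bilinearly, every correlation involving s' is R_s(\<tau>) minus twice sums of
  (-1)^s over a single column of the array (the column selected by e, shifted by \<tau>), and these column
  sums are -d(a_j), or K for the zero column. The autocorrelation of s' gets the additional term
  4 \<Sum> e(t) e(t + \<tau>), which is 4K if T divides \<tau> and 0 otherwise.\<close>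

lemma sum_lessThan_shift_mod:
  fixes g :: "nat \<Rightarrow> 'a::comm_monoid_add"
  assumes "0 < n"
  shows "(\<Sum>t<n. g ((t + k) mod n)) = (\<Sum>t<n. g t)"
proof -
  have inj: "inj_on (\<lambda>t. (t + k) mod n) {..<n}"
    by (auto intro!: inj_onI
        simp: cong_def[symmetric] cong_add_rcancel_nat cong_less_modulus_unique_nat)
  moreover have "(\<lambda>t. (t + k) mod n) ` {..<n} = {..<n}"
    using assms by (intro endo_inj_surj[OF _ _ inj]) auto
  ultimately have "bij_betw (\<lambda>t. (t + k) mod n) {..<n} {..<n}"
    by (simp add: bij_betw_def)
  then show ?thesis by (rule sum.reindex_bij_betw)
qed

lemma sum_lessThan_mult_column:
  fixes f :: "nat \<Rightarrow> 'a::comm_monoid_add"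
  assumes "c < T"
  shows "(\<Sum>t<K * T. if t mod T = c then f t else 0) = (\<Sum>i<K. f (i * T + c))"
proof (induction K)
  case 0 then show ?case by simp
next
  case (Suc K)
  let ?g = "\<lambda>t. if t mod T = c then f t else 0"
  have split: "{..<Suc K * T} = {..<K * T} \<union> {K * T..<K * T + T}" by auto
  have "(\<Sum>t<Suc K * T. ?g t) = (\<Sum>t<K * T. ?g t) + (\<Sum>t\<in>{K * T..<K * T + T}. ?g t)"
    unfolding split by (rule sum.union_disjoint) auto
  also have "(\<Sum>t\<in>{K * T..<K * T + T}. ?g t) = (\<Sum>j<T. ?g (K * T + j))"
    by (simp add: sum.atLeastLessThan_shift_0 atLeast0LessThan add.commute)
  also have "\<dots> = f (K * T + c)"
    using assms by (simp add: sum.delta' cong: if_cong)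
  finally show ?case using Suc by simp
qed

definition bit_sign :: "bool \<Rightarrow> int" where
  "bit_sign b = (-1) ^ of_bool b"

lemma bit_sign_simps [simp]: "bit_sign False = 1" "bit_sign True = -1"
  by (simp_all add: bit_sign_def)

lemma bit_sign_disj: "\<not> (x \<and> y) \<Longrightarrow> bit_sign (x \<or> y) = bit_sign x - 2 * of_bool y"
  by (cases x; cases y) simp_all

lemma corr_eq_sum_bit_sign:
  "0 < n \<Longrightarrow> corr n a b \<tau> = (\<Sum>t<n. bit_sign (a t) * bit_sign (b ((t + \<tau>) mod n)))"
  unfolding corr_def bit_sign_def by (rule sum.cong) (simp_all add: power_add)

lemma acorr_zero: "acorr n s 0 = int n"
  by (simp add: acorr_def corr_def power_add[symmetric])

lemma baldiff_False: "baldiff K (\<lambda>_. False) = - int K"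
  by (simp add: baldiff_def)

lemma sum_bit_sign_eq_neg_baldiff: "(\<Sum>i<K. bit_sign (a i)) = - baldiff K a"
proof -
  have "(\<Sum>i<K. bit_sign (a i)) = (\<Sum>i<K. 1 - 2 * of_bool (a i))"
    by (rule sum.cong) (simp_all add: bit_sign_def)
  also have "\<dots> = int K - 2 * int (card {t. t < K \<and> a t})"
    by (simp add: sum_subtractf sum_distrib_left[symmetric] lessThan_def Collect_conj_eq)
  finally show ?thesis by (simp add: baldiff_def)
qed

lemma
  fixes s e :: "nat \<Rightarrow> bool" and \<tau> :: nat
  assumes "0 < n" and disj: "\<And>t. \<not> (s t \<and> e t)"
  defines "L \<equiv> \<Sum>t<n. of_bool (e t) * bit_sign (s ((t + \<tau>) mod n))"
    and "R \<equiv> \<Sum>t<n. bit_sign (s t) * of_bool (e ((t + \<tau>) mod n))"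
  shows corr_disjoint_union_left: "corr n (\<lambda>t. s t \<or> e t) s \<tau> = acorr n s \<tau> - 2 * L"
    and corr_disjoint_union_right: "corr n s (\<lambda>t. s t \<or> e t) \<tau> = acorr n s \<tau> - 2 * R"
    and acorr_disjoint_union: "acorr n (\<lambda>t. s t \<or> e t) \<tau> = acorr n s \<tau> - 2 * L - 2 * R
                       + 4 * (\<Sum>t<n. of_bool (e t) * of_bool (e ((t + \<tau>) mod n)))"
proof -
  let ?S = "\<lambda>t. bit_sign (s t) * bit_sign (s ((t + \<tau>) mod n))"
  have expand: "bit_sign (s t \<or> e t) = bit_sign (s t) - 2 * of_bool (e t)" for t
    using disj by (rule bit_sign_disj)
  have acorr_s: "acorr n s \<tau> = (\<Sum>t<n. ?S t)"
    by (simp add: acorr_def corr_eq_sum_bit_sign[OF \<open>0 < n\<close>])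
  let ?l = "\<lambda>t. of_bool (e t) * bit_sign (s ((t + \<tau>) mod n))"
  let ?r = "\<lambda>t. bit_sign (s t) * of_bool (e ((t + \<tau>) mod n))"
  let ?c = "\<lambda>t. of_bool (e t) * of_bool (e ((t + \<tau>) mod n)) :: int"
  have "corr n (\<lambda>t. s t \<or> e t) s \<tau> = (\<Sum>t<n. ?S t - 2 * ?l t)"
    unfolding corr_eq_sum_bit_sign[OF \<open>0 < n\<close>] expand
    by (rule sum.cong) (simp_all add: algebra_simps)
  then show "corr n (\<lambda>t. s t \<or> e t) s \<tau> = acorr n s \<tau> - 2 * L"
    by (simp only: acorr_s L_def sum_subtractf sum_distrib_left)
  have "corr n s (\<lambda>t. s t \<or> e t) \<tau> = (\<Sum>t<n. ?S t - 2 * ?r t)"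
    unfolding corr_eq_sum_bit_sign[OF \<open>0 < n\<close>] expand
    by (rule sum.cong) (simp_all add: algebra_simps)
  then show "corr n s (\<lambda>t. s t \<or> e t) \<tau> = acorr n s \<tau> - 2 * R"
    by (simp only: acorr_s R_def sum_subtractf sum_distrib_left)
  have "acorr n (\<lambda>t. s t \<or> e t) \<tau> = (\<Sum>t<n. ?S t - 2 * ?l t - 2 * ?r t + 4 * ?c t)"
    unfolding acorr_def corr_eq_sum_bit_sign[OF \<open>0 < n\<close>] expand
    by (rule sum.cong) (simp_all add: algebra_simps)
  then show "acorr n (\<lambda>t. s t \<or> e t) \<tau> = acorr n s \<tau> - 2 * L - 2 * R
          + 4 * (\<Sum>t<n. of_bool (e t) * of_bool (e ((t + \<tau>) mod n)))"
    by (simp only: acorr_s L_def R_def sum.distrib sum_subtractf sum_distrib_left)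
qed

lemma interleave_eq:
  "interleave K T b t = b (t mod T) (t mod (K * T) div T mod K)"
  unfolding interleave_def by (simp add: mod_mod_cancel)

lemma interleave_row_col:
  assumes "i < K" "c < T"
  shows "interleave K T b (i * T + c) = b c i"
proof -
  have "i * T + c < Suc i * T"
    using assms(2) by simp
  also have "\<dots> \<le> K * T"
    using assms(1) by (intro mult_right_mono) simp_all
  finally show ?thesis
    using assms unfolding interleave_def by simp
qed

lemma sum_column_bit_sign_interleave:
  assumes "c < T"
  shows "(\<Sum>t<K * T. if t mod T = c then bit_sign (interleave K T b t) else 0) = - baldiff K (b c)"
proof -
  have "(\<Sum>t<K * T. if t mod T = c then bit_sign (interleave K T b t) else 0)
      = (\<Sum>i<K. bit_sign (interleave K T b (i * T + c)))"
    using assms by (rule sum_lessThan_mult_column)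
  also have "\<dots> = (\<Sum>i<K. bit_sign (b c i))"
    using assms by (intro sum.cong) (simp_all add: interleave_row_col)
  finally show ?thesis
    by (simp add: sum_bit_sign_eq_neg_baldiff)
qed

lemma mod_add_eq_0_iff:
  fixes t \<tau> T :: nat
  assumes "0 < T"
  shows "(t + \<tau>) mod T = 0 \<longleftrightarrow> t mod T = (T - \<tau> mod T) mod T"
proof -
  have "T - \<tau> mod T + \<tau> = T + T * (\<tau> div T)"
  proof -
    have "\<tau> mod T < T" "\<tau> mod T \<le> \<tau>"
      using assms by simp_all
    moreover have "\<tau> - \<tau> mod T = T * (\<tau> div T)"
      by (simp add: minus_mod_eq_mult_div)
    ultimately show ?thesis
      by linarith
  qed
  then have "(T - \<tau> mod T + \<tau>) mod T = 0"
    by simp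
  then have "(t + \<tau>) mod T = 0 \<longleftrightarrow> [t + \<tau> = (T - \<tau> mod T) + \<tau>] (mod T)"
    by (simp add: cong_def)
  also have "\<dots> \<longleftrightarrow> t mod T = (T - \<tau> mod T) mod T"
    unfolding cong_add_rcancel_nat by (simp add: cong_def)
  finally show ?thesis .
qed

context
  fixes K T :: nat
  assumes K: "0 < K" and T: "0 < T"
begin

lemma sum_mask_times_shifted:
  "(\<Sum>t<K * T. of_bool (t mod T = 0) * f ((t + \<tau>) mod (K * T)))
     = (\<Sum>t<K * T. if t mod T = \<tau> mod T then f t else (0::int))"
proof -
  define G where "G u = (if u mod T = \<tau> mod T then f u else 0)" for u
  have "(t + \<tau>) mod T = \<tau> mod T \<longleftrightarrow> t mod T = 0" for t
    using cong_add_rcancel_0_nat[of t \<tau> T] by (simp add: cong_def)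
  then have "(\<Sum>t<K * T. of_bool (t mod T = 0) * f ((t + \<tau>) mod (K * T)))
      = (\<Sum>t<K * T. G ((t + \<tau>) mod (K * T)))"
    unfolding G_def by (intro sum.cong) (simp_all add: mod_mod_cancel)
  also have "\<dots> = (\<Sum>t<K * T. G t)"
    using K T by (intro sum_lessThan_shift_mod) simp
  finally show ?thesis unfolding G_def .
qed

lemma sum_times_shifted_mask:
  "(\<Sum>t<K * T. f t * of_bool ((t + \<tau>) mod (K * T) mod T = 0))
     = (\<Sum>t<K * T. if t mod T = (T - \<tau> mod T) mod T then f t else (0::int))"
  by (intro sum.cong) (simp_all add: mod_mod_cancel mod_add_eq_0_iff[OF T])

lemma sum_mask_times_shifted_mask:
  "(\<Sum>t<K * T. of_bool (t mod T = 0) * of_bool ((t + \<tau>) mod (K * T) mod T = 0))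
     = (if \<tau> mod T = 0 then int K else 0)"
proof -
  have "(\<Sum>t<K * T. of_bool (t mod T = 0) * of_bool ((t + \<tau>) mod (K * T) mod T = 0))
      = (\<Sum>t<K * T. if t mod T = 0 then of_bool (\<tau> mod T = 0) else (0::int))"
  proof (intro sum.cong)
    fix t
    have "t mod T = 0 \<Longrightarrow> (t + \<tau>) mod T = \<tau> mod T"
      by (metis add_0 mod_add_left_eq)
    then show "of_bool (t mod T = 0) * of_bool ((t + \<tau>) mod (K * T) mod T = 0)
        = (if t mod T = 0 then of_bool (\<tau> mod T = 0) else (0::int))"
      by (simp add: mod_mod_cancel)
  qed simp
  also have "\<dots> = (if \<tau> mod T = 0 then int K else 0)"
    using T by (simp add: sum_lessThan_mult_column)
  finally show ?thesis .
qed

lemma sum_mask_times_shifted_bit_sign_interleave: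
  "(\<Sum>t<K * T. of_bool (t mod T = 0) * bit_sign (interleave K T b ((t + \<tau>) mod (K * T))))
     = - baldiff K (b (\<tau> mod T))"
  unfolding sum_mask_times_shifted[where f = "\<lambda>u. bit_sign (interleave K T b u)"]
  using T by (simp add: sum_column_bit_sign_interleave)

lemma sum_bit_sign_interleave_times_shifted_mask:
  "(\<Sum>t<K * T. bit_sign (interleave K T b t) * of_bool ((t + \<tau>) mod (K * T) mod T = 0))
     = - baldiff K (b ((T - \<tau> mod T) mod T))"
  unfolding sum_times_shifted_mask[where f = "\<lambda>u. bit_sign (interleave K T b u)"]
  using T by (simp add: sum_column_bit_sign_interleave)

end

theorem theorem1:
  fixes K T :: nat and a :: "nat \<Rightarrow> nat \<Rightarrow> bool" and \<tau> :: nat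
  assumes "K \<ge> 1" and "T \<ge> 2" and "\<tau> < K * T"
  defines "s \<equiv> interleave K T (\<lambda>j. if j = 0 then (\<lambda>_. False) else a j)"
    and "s' \<equiv> interleave K T (\<lambda>j. if j = 0 then (\<lambda>_. True) else a j)"
    and "\<tau>2 \<equiv> \<tau> mod T"
  shows "acorr (K * T) s' \<tau> =
           (if \<tau>2 = 0 then acorr (K * T) s \<tau>
            else acorr (K * T) s \<tau> + 2 * baldiff K (a \<tau>2) + 2 * baldiff K (a (T - \<tau>2))) \<and>
         corr (K * T) s s' \<tau> =
           (if \<tau> = 0 then int (K * T) - 2 * int K
            else if \<tau>2 = 0 then acorr (K * T) s \<tau> - 2 * int K
            else acorr (K * T) s \<tau> + 2 * baldiff K (a (T - \<tau>2))) \<and>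
         corr (K * T) s' s \<tau> =
           (if \<tau> = 0 then int (K * T) - 2 * int K
            else if \<tau>2 = 0 then acorr (K * T) s \<tau> - 2 * int K
            else acorr (K * T) s \<tau> + 2 * baldiff K (a \<tau>2))"
proof -
  define b where "b = (\<lambda>j. if j = 0 then (\<lambda>_. False) else a j)"
  have K: "0 < K" and T: "0 < T" and n: "0 < K * T"
    using assms(1,2) by simp_all
  have s'_eq: "s' = (\<lambda>t. s t \<or> t mod T = 0)"
    by (rule ext) (simp add: s_def s'_def interleave_eq)
  have disj: "\<not> (s t \<and> t mod T = 0)" for t
    by (simp add: s_def interleave_eq)
  have s_eq: "s = interleave K T b"
    by (simp add: s_def b_def)
  have \<tau>2: "\<tau>2 < T" "\<tau> = 0 \<Longrightarrow> \<tau>2 = 0"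
    using T by (simp_all add: \<tau>2_def)
  then have "(T - \<tau>2) mod T = (if \<tau>2 = 0 then 0 else T - \<tau>2)"
    by simp
  then show ?thesis
    unfolding s'_eq corr_disjoint_union_left[OF n disj] corr_disjoint_union_right[OF n disj]
      acorr_disjoint_union[OF n disj]
    unfolding s_eq sum_mask_times_shifted_bit_sign_interleave[OF K T]
      sum_bit_sign_interleave_times_shifted_mask[OF K T] sum_mask_times_shifted_mask[OF K T]
      \<tau>2_def[symmetric]
    using acorr_zero[of "K * T" "interleave K T b"] \<tau>2
    by (cases "\<tau> = 0"; cases "\<tau>2 = 0") (simp_all add: b_def baldiff_False)
qed

end
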